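(* For all integers $m,n\ge 0$, $$\binom{m+n}{m}H_{n+m}=\sum_{k=0}^{n}H_k\binom{m+n-k-1}{n-k}+H_m\binom{n+m}{n},$$ where $H_j$ denotes the $j$-th harmonic number.
   Context: The harmonic numbers are $H_0=0$ and $H_j=1+\frac12+\cdots+\frac1j$ for $j\ge 1$. Binomial coefficients are the generalized ones: for any integer $a$ (possibly negative) and integer $j\ge 0$, $\binom{a}{j}=\frac{a(a-1)\cdots(a-j+1)}{j!}$, with $\binom{a}{0}=1$; in particular $\binom{-1}{0}=1$. *)

theory Defs
  imports "HOL-Analysis.Analysis"
begin

end

theory Submission
  imports Defs
begin

(* Subtracting H_m C(m+n,n) from both sides, the claim says that the convolution
   F m n = sum_k H_k C(m+n-k-1, n-k) equals G m n = C(m+n,n) (H_(m+n) - H_m).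
   Both satisfy Pascal's recurrence F (m+1) (n+1) = F m (n+1) + F (m+1) n: for F this is
   Pascal's rule for generalized binomials termwise, for G it follows from Pascal's rule
   together with the absorption identity (m+1) C(m+n+2,n+1) = (m+n+2) C(m+n+1,n+1).
   Both also agree on the boundary: F m 0 = 0 = G m 0, and F 0 n = H_n = G 0 n, since for
   m = 0 only the term k = n, with C(-1,0) = 1, survives. *)

lemma pascal_recurrence_unique:
  fixes f g :: "nat \<Rightarrow> nat \<Rightarrow> 'a::plus"
  assumes "\<And>m. f m 0 = g m 0" and "\<And>n. f 0 n = g 0 n"
    and "\<And>m n. f (Suc m) (Suc n) = f m (Suc n) + f (Suc m) n"
    and "\<And>m n. g (Suc m) (Suc n) = g m (Suc n) + g (Suc m) n"
  shows "f m n = g m n"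
proof (induction n arbitrary: m)
  case 0
  show ?case by (rule assms(1))
next
  case outer: (Suc n)
  show ?case
  proof (induction m)
    case 0
    show ?case by (rule assms(2))
  next
    case (Suc m)
    then show ?case using outer.IH assms(3,4) by simp
  qed
qed

definition harm_binomial_conv :: "nat \<Rightarrow> nat \<Rightarrow> real" where
  "harm_binomial_conv m n = (\<Sum>k=0..n. harm k * ((real m + real n - real k - 1) gchoose (n - k)))"

lemma harm_binomial_conv_0_right: "harm_binomial_conv m 0 = 0"
  by (simp add: harm_binomial_conv_def harm_def)

lemma harm_binomial_conv_0_left: "harm_binomial_conv 0 n = harm n"
proof -
  have vanish: "(real n - real k - 1) gchoose (n - k) = 0" if "k < n" for k
  proof -
    have "real n - real k - 1 = real (n - k - 1)"
      using that by simp
    then have "(real n - real k - 1) gchoose (n - k) = real (n - k - 1 choose (n - k))"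
      by (simp only: binomial_gbinomial)
    then show ?thesis
      using that by simp
  qed
  have "harm_binomial_conv 0 n = (\<Sum>k=0..n. harm k * ((real n - real k - 1) gchoose (n - k)))"
    by (simp add: harm_binomial_conv_def)
  also have "\<dots> = (\<Sum>k\<in>{n}. harm k * ((real n - real k - 1) gchoose (n - k)))"
    by (intro sum.mono_neutral_right) (auto simp: vanish)
  finally show ?thesis by simp
qed

lemma harm_binomial_conv_Suc_Suc:
  "harm_binomial_conv (Suc m) (Suc n) = harm_binomial_conv m (Suc n) + harm_binomial_conv (Suc m) n"
proof -
  have pascal: "(real (Suc m) + real (Suc n) - real k - 1) gchoose (Suc n - k)
      = ((real m + real (Suc n) - real k - 1) gchoose (Suc n - k))
        + ((real (Suc m) + real n - real k - 1) gchoose (n - k))"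
    if "k \<le> n" for k
  proof -
    have shift: "real (Suc m) + real (Suc n) - real k - 1 = (real m + real n - real k) + 1"
      and left: "real m + real (Suc n) - real k - 1 = real m + real n - real k"
      and right: "real (Suc m) + real n - real k - 1 = real m + real n - real k"
      and index: "Suc n - k = Suc (n - k)"
      using that by auto
    show ?thesis
      unfolding shift left right index gbinomial_Suc_Suc by (rule add.commute)
  qed
  have "harm_binomial_conv (Suc m) (Suc n)
      = (\<Sum>k=0..n. harm k * ((real (Suc m) + real (Suc n) - real k - 1) gchoose (Suc n - k)))
        + harm (Suc n)"
    by (simp add: harm_binomial_conv_def)
  also have "(\<Sum>k=0..n. harm k * ((real (Suc m) + real (Suc n) - real k - 1) gchoose (Suc n - k)))
      = (\<Sum>k=0..n. harm k * ((real m + real (Suc n) - real k - 1) gchoose (Suc n - k)))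
        + harm_binomial_conv (Suc m) n"
    unfolding harm_binomial_conv_def sum.distrib [symmetric]
    by (rule sum.cong) (simp_all only: atLeastAtMost_iff pascal distrib_left)
  also have "\<dots> + harm (Suc n) = harm_binomial_conv m (Suc n) + harm_binomial_conv (Suc m) n"
    by (simp add: harm_binomial_conv_def)
  finally show ?thesis .
qed

lemma binomial_harm_diff_Suc_Suc:
  "real (Suc m + Suc n choose Suc n) * (harm (Suc m + Suc n) - harm (Suc m))
    = real (m + Suc n choose Suc n) * (harm (m + Suc n) - harm m)
      + real (Suc m + n choose n) * (harm (Suc m + n) - harm (Suc m))"
proof -
  define N where "N = Suc (m + n)"
  have sizes: "Suc m + Suc n = Suc N" "m + Suc n = N" "Suc m + n = N"
    by (simp_all add: N_def)
  have pascal: "real (Suc N choose Suc n) = real (N choose n) + real (N choose Suc n)"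
    by simp
  have "Suc N - Suc n = Suc m"
    by (simp add: N_def)
  then have "real (Suc m) * real (Suc N choose Suc n) = real (Suc N) * real (N choose Suc n)"
    using binomial_absorb_comp [of "Suc N" "Suc n"] by (metis diff_Suc_1 of_nat_mult)
  then have absorb: "real (Suc N choose Suc n) / real (Suc N) = real (N choose Suc n) / real (Suc m)"
    by (simp add: field_simps)
  have "real (Suc N choose Suc n) * (harm (Suc N) - harm (Suc m))
      = real (Suc N choose Suc n) * (harm N - harm m)
        - real (Suc N choose Suc n) / real (Suc m) + real (Suc N choose Suc n) / real (Suc N)"
    by (simp add: harm_Suc field_simps)
  also have "\<dots> = real (N choose Suc n) * (harm N - harm m)
      + real (N choose n) * (harm N - harm (Suc m))"
    unfolding absorb unfolding pascal harm_Suc [of m]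
    by (simp add: algebra_simps add_divide_distrib divide_inverse)
  finally show ?thesis
    unfolding sizes .
qed

lemma harm_binomial_conv_eq: "harm_binomial_conv m n = real (m + n choose n) * (harm (m + n) - harm m)"
  by (rule pascal_recurrence_unique [where g = "\<lambda>m n. real (m + n choose n) * (harm (m + n) - harm m)"])
    (simp add: harm_binomial_conv_0_right, simp add: harm_binomial_conv_0_left harm_def,
      rule harm_binomial_conv_Suc_Suc, rule binomial_harm_diff_Suc_Suc)

theorem theorem2p2:
  fixes m n :: nat
  shows "real (m + n choose m) * harm (n + m) =
    (\<Sum>k=0..n. harm k * ((real_of_int (int m + int n - int k - 1)) gchoose (n - k)))
    + harm m * real (n + m choose n)"
proof -
  have "(\<Sum>k=0..n. harm k * ((real_of_int (int m + int n - int k - 1)) gchoose (n - k)))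
      = harm_binomial_conv m n"
    by (simp add: harm_binomial_conv_def)
  also have "\<dots> = real (m + n choose n) * (harm (m + n) - harm m)"
    by (rule harm_binomial_conv_eq)
  finally show ?thesis
    using binomial_symmetric [of m "m + n"] by (simp add: add.commute algebra_simps)
qed

end
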